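(* Let $\mathcal{H}$ be finite-dimensional with Hamiltonian $H$, $\mathcal{C}=\{P_i\}$ nonzero mutually orthogonal projectors summing to $I$, $V_i=\mathrm{tr}[P_i]$, $\rho$ a density operator, $p_i=\mathrm{tr}[P_i\rho]$, $\rho_{\mathrm{cg}}=\sum_i\frac{p_i}{V_i}P_i$. Define $$W_{\mathcal{C}}^B(\rho)=\mathrm{tr}[H\rho]-\sum_ip_i\min_U\mathrm{tr}[HU(P_i/V_i)U^\dagger],\qquad W_{\mathcal{C}}(\rho)=\mathrm{tr}[H\rho]-\min_U\mathrm{tr}[HU\rho_{\mathrm{cg}}U^\dagger],$$ and, assuming there exist $\beta,\beta'\in(0,\infty)$ with $S_{\mathrm{vN}}(\rho_\beta)=\sum_ip_i\ln V_i$ and $S_{\mathrm{vN}}(\rho_{\beta'})=-\sum_ip_i\ln p_i+\sum_ip_i\ln V_i$ (where $\rho_\gamma=e^{-\gamma H}/\mathrm{tr}[e^{-\gamma H}]$), define $W_{\mathcal{C}}^{B\infty}(\rho)=\mathrm{tr}[H(\rho-\rho_\beta)]$ and $W_{\mathcal{C}}^{\infty}(\rho)=\mathrm{tr}[H(\rho-\rho_{\beta'})]$. Then $$W_{\mathcal{C}}(\rho)\le W^B_{\mathcal{C}}(\rho)\le W^{B\infty}_{\mathcal{C}}(\rho)\quad\text{and}\quad W_{\mathcal{C}}(\rho)\le W^{\infty}_{\mathcal{C}}(\rho)\le W^{B\infty}_{\mathcal{C}}(\rho).$$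
   Context: Minima are over unitaries $U$ on $\mathcal{H}$; $S_{\mathrm{vN}}(\sigma)=-\mathrm{tr}[\sigma\ln\sigma]$ with $0\ln0=0$. $W^B_{\mathcal{C}}$ is called the Boltzmann ergotropy, $W_{\mathcal{C}}$ the observational ergotropy, and $W^{B\infty}_{\mathcal{C}}$, $W^{\infty}_{\mathcal{C}}$ their large-$N$ versions. *)

theory Defs
  imports "HOL-Analysis.Analysis"
begin

type_synonym 'n cmat = "complex^'n^'n"

definition cadj :: "'n::finite cmat \<Rightarrow> 'n cmat" where
  "cadj A = (\<chi> i j. cnj (A $ j $ i))"

definition smat :: "complex \<Rightarrow> 'n::finite cmat \<Rightarrow> 'n cmat" where
  "smat c A = (\<chi> i j. c * A $ i $ j)"

definition hermitian :: "'n::finite cmat \<Rightarrow> bool" where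
  "hermitian A \<longleftrightarrow> cadj A = A"

definition unitary :: "'n::finite cmat \<Rightarrow> bool" where
  "unitary U \<longleftrightarrow> U ** cadj U = mat 1 \<and> cadj U ** U = mat 1"

definition cdiag :: "(real^'n) \<Rightarrow> 'n::finite cmat" where
  "cdiag d = (\<chi> i j. if i = j then complex_of_real (d $ i) else 0)"

definition psd :: "'n::finite cmat \<Rightarrow> bool" where
  "psd A \<longleftrightarrow> hermitian A \<and> (\<forall>v::complex^'n. 0 \<le> Re (\<Sum>i\<in>UNIV. cnj (v $ i) * (A *v v) $ i))"

definition density :: "'n::finite cmat \<Rightarrow> bool" where
  "density \<rho> \<longleftrightarrow> psd \<rho> \<and> trace \<rho> = 1"

definition hfun :: "(real \<Rightarrow> real) \<Rightarrow> 'n::finite cmat \<Rightarrow> 'n cmat" where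
  "hfun f A = (SOME B. \<exists>U d. unitary U \<and> A = U ** cdiag d ** cadj U
                 \<and> B = U ** cdiag (\<chi> i. f (d $ i)) ** cadj U)"

definition xlnx :: "real \<Rightarrow> real" where
  "xlnx x = (if x = 0 then 0 else x * ln x)"

definition vN_entropy :: "'n::finite cmat \<Rightarrow> real" where
  "vN_entropy \<sigma> = - Re (trace (hfun xlnx \<sigma>))"

definition gibbs :: "real \<Rightarrow> 'n::finite cmat \<Rightarrow> 'n cmat" where
  "gibbs \<gamma> H = (let E = hfun (\<lambda>x. exp (- \<gamma> * x)) H in smat (1 / trace E) E)"

text \<open>min over unitaries of tr[H U X U^dagger] (the minimum is attained; we write it as an infimum).\<close>
definition min_unitary :: "'n::finite cmat \<Rightarrow> 'n cmat \<Rightarrow> real" where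
  "min_unitary H X = Inf {Re (trace (H ** U ** X ** cadj U)) | U. unitary U}"

definition coarse_projectors :: "('i::finite \<Rightarrow> 'n::finite cmat) \<Rightarrow> bool" where
  "coarse_projectors P \<longleftrightarrow>
     (\<forall>i. P i \<noteq> 0 \<and> hermitian (P i) \<and> P i ** P i = P i)
   \<and> (\<forall>i j. i \<noteq> j \<longrightarrow> P i ** P j = 0)
   \<and> (\<Sum>i\<in>UNIV. P i) = mat 1"

definition Vol :: "('i::finite \<Rightarrow> 'n::finite cmat) \<Rightarrow> 'i \<Rightarrow> real" where
  "Vol P i = Re (trace (P i))"

definition prob :: "('i::finite \<Rightarrow> 'n::finite cmat) \<Rightarrow> 'n cmat \<Rightarrow> 'i \<Rightarrow> real" where
  "prob P \<rho> i = Re (trace (P i ** \<rho>))"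

definition rho_cg :: "('i::finite \<Rightarrow> 'n::finite cmat) \<Rightarrow> 'n cmat \<Rightarrow> 'n cmat" where
  "rho_cg P \<rho> = (\<Sum>i\<in>UNIV. smat (complex_of_real (prob P \<rho> i / Vol P i)) (P i))"

definition energy :: "'n::finite cmat \<Rightarrow> 'n cmat \<Rightarrow> real" where
  "energy H \<rho> = Re (trace (H ** \<rho>))"

definition W_B :: "'n::finite cmat \<Rightarrow> ('i::finite \<Rightarrow> 'n cmat) \<Rightarrow> 'n cmat \<Rightarrow> real" where
  "W_B H P \<rho> = energy H \<rho>
     - (\<Sum>i\<in>UNIV. prob P \<rho> i * min_unitary H (smat (complex_of_real (1 / Vol P i)) (P i)))"

definition W_obs :: "'n::finite cmat \<Rightarrow> ('i::finite \<Rightarrow> 'n cmat) \<Rightarrow> 'n cmat \<Rightarrow> real" where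
  "W_obs H P \<rho> = energy H \<rho> - min_unitary H (rho_cg P \<rho>)"

definition W_inf :: "'n::finite cmat \<Rightarrow> real \<Rightarrow> 'n cmat \<Rightarrow> real" where
  "W_inf H \<gamma> \<rho> = Re (trace (H ** (\<rho> - gibbs \<gamma> H)))"

end

theory Submission
  imports Defs
begin

(* All four inequalities rest on the Gibbs variational principle: among density operators the Gibbs
   state \<rho>_\<beta> minimises the free energy tr[H \<sigma>] - S(\<sigma>)/\<beta>.  Hence min_U tr[H U X U\<^sup>\<dagger>] \<ge> F_\<beta> + S(X)/\<beta>
   for every density operator X, where F_\<beta> is the free energy of \<rho>_\<beta>.  Applied to P_i/V_i (entropy
   ln V_i) and to \<rho>_cg (entropy at least -\<Sum> p_i ln p_i + \<Sum> p_i ln V_i), the entropy hypotheses turn these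
   lower bounds into the Gibbs energies tr[H \<rho>_\<beta>] and tr[H \<rho>_\<beta>'].  W_C \<le> W^B_C is superadditivity of the
   minimum over unitaries, and tr[H \<rho>_\<beta>] \<le> tr[H \<rho>_\<beta>'] follows from the variational principle at \<beta>
   evaluated at \<rho>_\<beta>', because S(\<rho>_\<beta>) \<le> S(\<rho>_\<beta>').
   Comparisons of spectra go through the doubly stochastic matrix (|C_kj|\<^sup>2) of a unitary C, with
   Jensen's inequality for the convex function x ln x. *)

lemma mat_mult_nth: "(A ** B) $ i $ j = (\<Sum>k\<in>UNIV. A$i$k * B$k$j)"
  by (simp add: matrix_matrix_mult_def)

lemma mat_vec_nth: "(A *v x) $ i = (\<Sum>k\<in>UNIV. A$i$k * x$k)"
  by (simp add: matrix_vector_mult_def)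

lemma mat_nth: "(mat c :: 'a::zero^'n^'n) $ i $ j = (if i = j then c else 0)"
  by (simp add: mat_def)

lemma cadj_nth [simp]: "cadj A $ i $ j = cnj (A $ j $ i)"
  by (simp add: cadj_def)

lemma smat_nth [simp]: "smat c A $ i $ j = c * A $ i $ j"
  by (simp add: smat_def)

lemma cdiag_nth: "cdiag d $ i $ j = (if i = j then complex_of_real (d $ i) else 0)"
  by (simp add: cdiag_def)

lemma cadj_cadj [simp]: "cadj (cadj A) = A"
  by (simp add: vec_eq_iff)

lemma cadj_mult: "cadj (A ** B) = cadj B ** cadj A"
  by (simp add: vec_eq_iff mat_mult_nth mult.commute)

lemma cadj_cdiag [simp]: "cadj (cdiag d) = cdiag d"
  by (simp add: vec_eq_iff cdiag_nth)

lemma cadj_mat1 [simp]: "cadj (mat 1) = mat 1"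
  by (simp add: vec_eq_iff mat_nth)

lemma cadj_sum: "cadj (\<Sum>i\<in>S. A i) = (\<Sum>i\<in>S. cadj (A i))"
  by (induction S rule: infinite_finite_induct) (auto simp: vec_eq_iff)

lemma cadj_smat: "cadj (smat c A) = smat (cnj c) (cadj A)"
  by (simp add: vec_eq_iff)

lemma unitary_mat1: "unitary (mat 1)"
  by (simp add: unitary_def)

lemma unitary_cadj: "unitary U \<Longrightarrow> unitary (cadj U)"
  by (simp add: unitary_def)

lemma unitary_mult: "unitary U \<Longrightarrow> unitary V \<Longrightarrow> unitary (U ** V)"
  unfolding unitary_def cadj_mult by (metis matrix_mul_assoc matrix_mul_lid)

lemma unitary_conj_cancel: "unitary W \<Longrightarrow> cadj W ** (W ** D ** cadj W) ** W = D"
  unfolding unitary_def by (metis matrix_mul_assoc matrix_mul_lid matrix_mul_rid)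

lemma unitary_row_norms: "unitary U \<Longrightarrow> (\<Sum>j\<in>UNIV. (cmod (U$k$j))\<^sup>2) = 1"
proof -
  assume "unitary U"
  hence "(U ** cadj U) $ k $ k = 1" unfolding unitary_def by (simp add: mat_nth)
  moreover have "(U ** cadj U) $ k $ k = complex_of_real (\<Sum>j\<in>UNIV. (cmod (U$k$j))\<^sup>2)"
    by (simp only: mat_mult_nth cadj_nth of_real_sum complex_norm_square)
  ultimately show ?thesis by (metis of_real_eq_1_iff)
qed

lemma unitary_col_norms: "unitary U \<Longrightarrow> (\<Sum>k\<in>UNIV. (cmod (U$k$j))\<^sup>2) = 1"
  using unitary_row_norms[OF unitary_cadj] by simp

lemma unitary_entry_norm_le: "unitary U \<Longrightarrow> cmod (U$k$j) \<le> 1"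
  using member_le_sum[of j UNIV "\<lambda>j. (cmod (U$k$j))\<^sup>2"] unitary_row_norms[of U k]
  by (simp add: abs_square_le_1)

lemma trace_unitary_conj: "unitary U \<Longrightarrow> trace (U ** X ** cadj U) = trace X"
  unfolding unitary_def by (metis matrix_mul_assoc matrix_mul_rid trace_mul_sym)

lemma trace_cdiag: "trace (cdiag d) = (\<Sum>i\<in>UNIV. complex_of_real (d $ i))"
  by (simp add: trace_def cdiag_nth)

lemma trace_cdiag_mult: "trace (cdiag h ** M) = (\<Sum>k\<in>UNIV. complex_of_real (h$k) * M$k$k)"
  by (simp add: trace_def mat_mult_nth cdiag_nth if_distrib if_distribR cong: if_cong)

lemma hermitian_conj_cdiag: "hermitian (U ** cdiag d ** cadj U)"
  unfolding hermitian_def cadj_mult by (simp add: matrix_mul_assoc)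

lemma conj_cdiag_diag_nth:
  "(U ** cdiag s ** cadj U) $ k $ k = complex_of_real (\<Sum>j\<in>UNIV. s$j * (cmod (U$k$j))\<^sup>2)"
proof -
  have "(U ** cdiag s ** cadj U) $ k $ k = (\<Sum>j\<in>UNIV. U$k$j * complex_of_real (s$j) * cnj (U$k$j))"
    by (simp add: mat_mult_nth cdiag_nth if_distrib cong: if_cong)
  also have "\<dots> = (\<Sum>j\<in>UNIV. complex_of_real (s$j * (cmod (U$k$j))\<^sup>2))"
    by (intro sum.cong refl) (simp add: complex_norm_square[symmetric] mult.commute mult.left_commute)
  finally show ?thesis by simp
qed

lemma mat_mult_diff_right: "A ** (B - C) = A ** B - A ** (C::complex^'n::finite^'n)"
  by (simp add: vec_eq_iff mat_mult_nth right_diff_distrib sum_subtractf)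

lemma mat_mult_sum_left: "(\<Sum>i\<in>S. A i) ** B = (\<Sum>i\<in>S. A i ** (B::complex^'n::finite^'n))"
  by (simp add: vec_eq_iff mat_mult_nth sum_distrib_right) (intro allI, rule sum.swap)

lemma mat_mult_sum_right: "A ** (\<Sum>i\<in>S. B i) = (\<Sum>i\<in>S. (A::complex^'n::finite^'n) ** B i)"
  by (simp add: vec_eq_iff mat_mult_nth sum_distrib_left) (intro allI, rule sum.swap)

lemma smat_mult_left: "smat c A ** B = smat c (A ** (B::complex^'n::finite^'n))"
  by (simp add: vec_eq_iff mat_mult_nth sum_distrib_left mult.assoc)

lemma smat_mult_right: "A ** smat c B = smat c (A ** (B::complex^'n::finite^'n))"
  by (simp add: vec_eq_iff mat_mult_nth sum_distrib_left mult.left_commute)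

lemma smat_conj: "smat c (U ** D ** V) = U ** smat c D ** (V::complex^'n::finite^'n)"
  by (simp add: vec_eq_iff mat_mult_nth sum_distrib_left sum_distrib_right mult.assoc mult.left_commute)

lemma smat_smat: "smat a (smat b A) = smat (a * b) A"
  by (simp add: vec_eq_iff)

lemma smat_cdiag: "smat (complex_of_real a) (cdiag e) = cdiag (\<chi> i. a * e$i)"
  by (simp add: vec_eq_iff cdiag_nth)

lemma trace_sum: "trace (\<Sum>i\<in>S. A i) = (\<Sum>i\<in>S. trace (A i :: complex^'n::finite^'n))"
  by (simp add: trace_def) (subst sum.swap, rule refl)

lemma trace_smat: "trace (smat c A) = c * trace (A::complex^'n::finite^'n)"
  by (simp add: trace_def sum_distrib_left)

lemma Re_trace_conj_linear:
  "Re (trace (H ** U ** (\<Sum>i\<in>UNIV. smat (complex_of_real (a i)) (X i)) ** cadj U))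
   = (\<Sum>i\<in>UNIV. a i * Re (trace (H ** U ** X i ** cadj (U::complex^'n::finite^'n))))"
proof -
  have "H ** U ** (\<Sum>i\<in>UNIV. smat (complex_of_real (a i)) (X i)) ** cadj U
      = (\<Sum>i\<in>UNIV. smat (complex_of_real (a i)) (H ** U ** X i ** cadj U))"
    by (simp add: mat_mult_sum_left mat_mult_sum_right smat_mult_left smat_mult_right)
  thus ?thesis by (simp add: trace_sum trace_smat)
qed

definition cinner :: "complex^'n::finite \<Rightarrow> complex^'n \<Rightarrow> complex" where
  "cinner x y = (\<Sum>i\<in>UNIV. cnj (x$i) * y$i)"

lemma cinner_add_left: "cinner (x + y) z = cinner x z + cinner y z"
  by (simp add: cinner_def distrib_right sum.distrib)

lemma cinner_add_right: "cinner x (y + z) = cinner x y + cinner x z"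
  by (simp add: cinner_def distrib_left sum.distrib)

lemma cinner_diff_right: "cinner x (y - z) = cinner x y - cinner x z"
  by (simp add: cinner_def right_diff_distrib sum_subtractf)

lemma cinner_smult_left: "cinner (c *s x) y = cnj c * cinner x y"
  by (simp add: cinner_def sum_distrib_left algebra_simps)

lemma cinner_smult_right: "cinner x (c *s y) = c * cinner x y"
  by (simp add: cinner_def sum_distrib_left algebra_simps)

lemma cinner_commute: "cinner y x = cnj (cinner x y)"
  by (simp add: cinner_def mult.commute)

lemma cinner_self: "cinner x x = complex_of_real ((norm x)\<^sup>2)"
proof -
  have "cinner x x = (\<Sum>i\<in>UNIV. complex_of_real ((cmod (x$i))\<^sup>2))"
    unfolding cinner_def by (intro sum.cong refl, subst complex_norm_square, rule mult.commute)
  also have "\<dots> = complex_of_real ((norm x)\<^sup>2)"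
    by (simp add: norm_vec_def L2_set_def sum_nonneg)
  finally show ?thesis .
qed

lemma cinner_adj: "cinner x (A *v y) = cinner (cadj A *v x) y"
proof -
  have "cinner x (A *v y) = (\<Sum>i\<in>UNIV. \<Sum>k\<in>UNIV. cnj (x$i) * A$i$k * y$k)"
    by (simp add: cinner_def mat_vec_nth sum_distrib_left mult.assoc)
  also have "\<dots> = (\<Sum>k\<in>UNIV. \<Sum>i\<in>UNIV. cnj (x$i) * A$i$k * y$k)"
    by (rule sum.swap)
  also have "\<dots> = cinner (cadj A *v x) y"
    by (simp add: cinner_def mat_vec_nth sum_distrib_left sum_distrib_right mult.commute mult.left_commute)
  finally show ?thesis .
qed

lemma cinner_hermitian: "hermitian A \<Longrightarrow> cinner x (A *v y) = cinner (A *v x) y"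
  using cinner_adj[of x A y] by (simp add: hermitian_def)

lemma smult_of_real: "complex_of_real r *s (x::complex^'n) = r *\<^sub>R x"
  by (rule iffD2[OF vec_eq_iff], rule allI, simp only: vector_smult_component vector_scaleR_component,
      simp add: scaleR_conv_of_real)

lemma cinner_scaleR_left: "cinner (r *\<^sub>R x) y = complex_of_real r * cinner x y"
  by (metis smult_of_real cinner_smult_left complex_cnj_complex_of_real)

lemma cinner_scaleR_right: "cinner x (r *\<^sub>R y) = complex_of_real r * cinner x y"
  by (metis smult_of_real cinner_smult_right)

lemma mat_vec_scaleR: "M *v (r *\<^sub>R x) = r *\<^sub>R (M *v (x::complex^'n))"
  by (metis smult_of_real vector_scalar_commute)

lemma conj_diag_nth_cinner: "(cadj Y ** X ** Y)$k$k = cinner (column k Y) (X *v column k Y)"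
  by (simp add: mat_mult_nth mat_vec_nth cinner_def column_def sum_distrib_left sum_distrib_right mult.assoc)
     (subst sum.swap, rule refl)

section \<open>Spectral theorem for Hermitian matrices\<close>

lemma linear_quadratic_nonpos_imp_zero:
  fixes c d :: real
  assumes "\<And>t. 2*t*c + t\<^sup>2*d \<le> 0"
  shows "c = 0"
proof (rule ccontr)
  assume "c \<noteq> 0"
  define D where "D = 1 + \<bar>d\<bar>"
  have D: "D > 0" unfolding D_def by simp
  have "2*(c/D)*c + (c/D)\<^sup>2*d = c\<^sup>2 * (2*D + d) / D\<^sup>2"
    using D by (simp add: power2_eq_square divide_simps) (simp add: algebra_simps)
  moreover have "c\<^sup>2 * (2*D + d) / D\<^sup>2 > 0"
    using \<open>c \<noteq> 0\<close> D unfolding D_def by (intro divide_pos_pos mult_pos_pos) (auto simp: abs_if)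
  ultimately show False using assms[of "c/D"] by linarith
qed

lemma closed_mat_vec_kernel: "closed {x::complex^'n. M *v x = 0}"
proof -
  have "{x::complex^'n. M *v x = 0} = (\<Inter>i. {x. (\<Sum>k\<in>UNIV. M$i$k * x$k) = 0})"
    by (auto simp: vec_eq_iff mat_vec_nth)
  also have "closed \<dots>"
    by (intro closed_INT ballI closed_Collect_eq continuous_intros)
  finally show ?thesis .
qed

text \<open>A maximiser of the Rayleigh quotient on the unit sphere of an \<open>A\<close>-invariant kernel is an eigenvector:
  the first variation of the quotient in every direction of the kernel vanishes.\<close>

lemma hermitian_eigenvector_in_kernel:
  fixes A M :: "complex^'n::finite^'n"
  assumes herm: "hermitian A" and inv: "\<And>x. M *v x = 0 \<Longrightarrow> M *v (A *v x) = 0"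
    and x0: "x0 \<noteq> 0" "M *v x0 = 0"
  shows "\<exists>v l. M *v v = 0 \<and> norm v = 1 \<and> A *v v = complex_of_real l *s v"
proof -
  define K where "K = {x::complex^'n. M *v x = 0} \<inter> sphere 0 1"
  define f where "f x = Re (cinner x (A *v x))" for x :: "complex^'n"
  have "compact K" unfolding K_def
    by (intro closed_Int_compact closed_mat_vec_kernel compact_sphere)
  moreover have "(1/norm x0) *\<^sub>R x0 \<in> K" using x0 unfolding K_def by (simp add: mat_vec_scaleR)
  moreover have "continuous_on K f"
    unfolding f_def cinner_def mat_vec_nth by (intro continuous_intros)
  ultimately obtain v where vK: "v \<in> K" and vmax: "\<And>y. y \<in> K \<Longrightarrow> f y \<le> f v"
    using continuous_attains_sup[of K f] by blast
  define l where "l = f v"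
  have Mv: "M *v v = 0" and nv: "norm v = 1" using vK unfolding K_def by auto
  have fu: "f u \<le> l * (norm u)\<^sup>2" if Mu: "M *v u = 0" for u
  proof (cases "u = 0")
    case True then show ?thesis by (simp add: f_def cinner_def)
  next
    case False
    define x where "x = (1/norm u) *\<^sub>R u"
    have "x \<in> K" using Mu False unfolding K_def x_def by (simp add: mat_vec_scaleR)
    hence "f x \<le> l" using vmax l_def by auto
    moreover have "f x = f u / (norm u)\<^sup>2"
      unfolding f_def x_def mat_vec_scaleR cinner_scaleR_left cinner_scaleR_right
      by (simp add: power2_eq_square)
    ultimately show ?thesis using False by (simp add: divide_le_eq)
  qed
  have first_variation: "Re (cinner w (A *v v - complex_of_real l *s v)) = 0" if Mw: "M *v w = 0" for w
  proof -
    define c where "c = Re (cinner w (A *v v)) - l * Re (cinner w v)"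
    define d where "d = Re (cinner w (A *v w)) - l * Re (cinner w w)"
    have "2*t*c + t\<^sup>2*d \<le> 0" for t
    proof -
      define u where "u = v + t *\<^sub>R w"
      have Mu: "M *v u = 0" unfolding u_def by (simp add: matrix_vector_right_distrib mat_vec_scaleR Mv Mw)
      have "Re (cinner v (A *v w)) = Re (cinner w (A *v v))"
        using cinner_hermitian[OF herm, of v w] cinner_commute[of w "A *v v"] by simp
      hence fu_expand: "f u = f v + 2*t*Re (cinner w (A *v v)) + t\<^sup>2 * Re (cinner w (A *v w))"
        unfolding f_def u_def matrix_vector_right_distrib mat_vec_scaleR cinner_add_left
          cinner_add_right cinner_scaleR_left cinner_scaleR_right
        by (simp add: power2_eq_square algebra_simps)
      have "(norm u)\<^sup>2 = Re (cinner u u)" by (simp add: cinner_self)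
      moreover have "Re (cinner v w) = Re (cinner w v)" using cinner_commute[of v w] by simp
      moreover have "Re (cinner v v) = 1" using nv by (simp add: cinner_self)
      ultimately have nu_expand: "(norm u)\<^sup>2 = 1 + 2*t*Re (cinner w v) + t\<^sup>2 * Re (cinner w w)"
        unfolding u_def cinner_add_left cinner_add_right cinner_scaleR_left cinner_scaleR_right
        by (simp add: power2_eq_square algebra_simps)
      show ?thesis using fu[OF Mu] unfolding fu_expand nu_expand c_def d_def l_def
        by (simp add: algebra_simps)
    qed
    hence "c = 0" by (rule linear_quadratic_nonpos_imp_zero)
    then show ?thesis unfolding c_def by (simp add: cinner_diff_right cinner_smult_right)
  qed
  define z where "z = A *v v - complex_of_real l *s v"
  have Mz: "M *v z = 0"
    unfolding z_def by (simp add: matrix_vector_mult_diff_distrib vector_scalar_commute Mv inv)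
  have "cinner w z = 0" if Mw: "M *v w = 0" for w
  proof -
    have "M *v (\<i> *s w) = 0" by (simp add: vector_scalar_commute Mw)
    hence "Im (cinner w z) = 0"
      using first_variation[of "\<i> *s w"] by (simp add: z_def cinner_smult_left)
    thus ?thesis using first_variation[OF Mw] z_def by (simp add: complex_eq_iff)
  qed
  hence "z = 0" using Mz cinner_self[of z] by simp
  hence "A *v v = complex_of_real l *s v" unfolding z_def by simp
  then show ?thesis using Mv nv by blast
qed

lemma hermitian_orthonormal_eigenvectors:
  fixes A :: "complex^'n::finite^'n"
  assumes herm: "hermitian A"
  shows "k \<le> CARD('n) \<Longrightarrow> \<exists>(S::'n set) v l. card S = k \<and>
     (\<forall>i\<in>S. \<forall>j\<in>S. cinner (v i) (v j) = (if i = j then 1 else 0)) \<and>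
     (\<forall>i\<in>S. A *v v i = complex_of_real (l i) *s v i)"
proof (induction k)
  case 0
  show ?case by (rule exI[of _ "{}"]) auto
next
  case (Suc k)
  from Suc.IH[OF Suc_leD[OF Suc.prems]] obtain S :: "'n set" and v l where cS: "card S = k"
    and on: "\<forall>i\<in>S. \<forall>j\<in>S. cinner (v i) (v j) = (if i = j then 1 else 0)"
    and ev: "\<forall>i\<in>S. A *v v i = complex_of_real (l i) *s v i" by auto
  have "S \<noteq> UNIV" using cS Suc.prems by auto
  then obtain j where jS: "j \<notin> S" by auto
  define M :: "complex^'n^'n" where "M = (\<chi> i. if i \<in> S then (\<chi> a. cnj (v i $ a)) else 0)"
  have M_ker: "M *v x = 0 \<longleftrightarrow> (\<forall>i\<in>S. cinner (v i) x = 0)" for x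
    by (auto simp: vec_eq_iff M_def mat_vec_nth cinner_def)
  have "row j M = 0" using jS by (simp add: row_def M_def vec_eq_iff)
  hence "\<not> invertible M" using det_zero_row(2) invertible_det_nz by blast
  then obtain x0 where x0: "x0 \<noteq> 0" "M *v x0 = 0"
    using invertible_left_inverse matrix_left_invertible_ker by blast
  have inv: "M *v (A *v x) = 0" if "M *v x = 0" for x
    using that ev by (simp add: M_ker cinner_hermitian[OF herm] cinner_smult_left)
  obtain w lw where w: "M *v w = 0" "norm w = 1" "A *v w = complex_of_real lw *s w"
    using hermitian_eigenvector_in_kernel[OF herm inv x0] by blast
  have ww: "cinner w w = 1" using w(2) by (simp add: cinner_self)
  have vw: "cinner (v i) w = 0" and wv: "cinner w (v i) = 0" if "i \<in> S" for i
    using w(1) that cinner_commute[of w "v i"] by (auto simp: M_ker)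
  show ?case
  proof (intro exI conjI)
    show "card (insert j S) = Suc k" using cS jS by (simp add: card_insert_if)
    show "\<forall>i\<in>insert j S. \<forall>i'\<in>insert j S.
            cinner ((v(j:=w)) i) ((v(j:=w)) i') = (if i = i' then 1 else 0)"
      using on ww vw wv jS by auto
    show "\<forall>i\<in>insert j S. A *v (v(j:=w)) i = complex_of_real ((l(j:=lw)) i) *s (v(j:=w)) i"
      using ev w(3) jS by auto
  qed
qed

theorem hermitian_spectral:
  fixes A :: "complex^'n::finite^'n"
  assumes herm: "hermitian A"
  shows "\<exists>U d. unitary U \<and> A = U ** cdiag d ** cadj U"
proof -
  obtain S :: "'n set" and v l where cS: "card S = CARD('n)"
    and on: "\<forall>i\<in>S. \<forall>j\<in>S. cinner (v i) (v j) = (if i = j then 1 else 0)"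
    and ev: "\<forall>i\<in>S. A *v v i = complex_of_real (l i) *s v i"
    using hermitian_orthonormal_eigenvectors[OF herm, of "CARD('n)"] by auto
  have SU: "S = UNIV" using cS card_subset_eq[of UNIV S] by auto
  define U :: "complex^'n^'n" where "U = (\<chi> a i. v i $ a)"
  define d :: "real^'n" where "d = (\<chi> i. l i)"
  have UU: "cadj U ** U = mat 1"
    using on SU by (simp add: vec_eq_iff mat_mult_nth U_def mat_nth cinner_def)
  hence UU': "U ** cadj U = mat 1" by (simp add: matrix_left_right_inverse)
  have AU: "A ** U = U ** cdiag d"
  proof -
    have "(A ** U) $ a $ i = (A *v v i) $ a" for a i
      by (simp add: mat_mult_nth mat_vec_nth U_def)
    moreover have "(U ** cdiag d) $ a $ i = complex_of_real (l i) * v i $ a" for a i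
      by (simp add: mat_mult_nth U_def cdiag_nth d_def if_distrib mult.commute cong: if_cong)
    ultimately show ?thesis using ev SU by (simp add: vec_eq_iff)
  qed
  have "A = A ** U ** cadj U" using UU' by (simp add: matrix_mul_assoc[symmetric])
  also have "\<dots> = U ** cdiag d ** cadj U" by (simp add: AU)
  finally show ?thesis using UU UU' unfolding unitary_def by blast
qed

lemma hfun_spectral:
  assumes "hermitian A"
  obtains W q where "unitary W" "A = W ** cdiag q ** cadj W"
    "hfun f A = W ** cdiag (\<chi> i. f (q$i)) ** cadj W"
proof -
  obtain U d where "unitary U" "A = U ** cdiag d ** cadj U" using hermitian_spectral[OF assms] by blast
  hence "\<exists>B U d. unitary U \<and> A = U ** cdiag d ** cadj U \<and> B = U ** cdiag (\<chi> i. f (d $ i)) ** cadj U"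
    by blast
  hence "\<exists>U d. unitary U \<and> A = U ** cdiag d ** cadj U \<and> hfun f A = U ** cdiag (\<chi> i. f (d $ i)) ** cadj U"
    unfolding hfun_def by (rule someI_ex)
  thus ?thesis using that by blast
qed

lemma xlnx_nonpos: "0 \<le> x \<Longrightarrow> x \<le> 1 \<Longrightarrow> xlnx x \<le> 0"
  by (simp add: xlnx_def mult_nonneg_nonpos)

lemma xlnx_divide: "V > 0 \<Longrightarrow> p \<ge> 0 \<Longrightarrow> V * xlnx (p / V) = xlnx p - p * ln V"
  by (cases "p = 0") (auto simp: xlnx_def ln_div algebra_simps)

lemma mult_ln_minus_xlnx_le: assumes "s \<ge> 0" "r > 0" shows "s * ln r - xlnx s \<le> r - s"
proof (cases "s = 0")
  case True then show ?thesis using assms by (simp add: xlnx_def)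
next
  case False
  hence s: "s > 0" using assms by simp
  have "ln (r/s) \<le> r/s - 1" using assms s by (intro ln_le_minus_one) simp
  hence "s * ln (r/s) \<le> s * (r/s - 1)" using s by (simp add: mult_left_mono)
  thus ?thesis using s assms by (simp add: xlnx_def ln_div right_diff_distrib)
qed

lemma xlnx_tangent_le: assumes "q > 0" "c \<ge> 0" shows "xlnx q + (1 + ln q) * (c - q) \<le> xlnx c"
  using mult_ln_minus_xlnx_le[OF assms(2,1)] assms by (simp add: xlnx_def algebra_simps)

lemma jensen_xlnx:
  assumes fin: "finite I" and a: "\<And>j. j \<in> I \<Longrightarrow> a j \<ge> 0" and sa: "(\<Sum>j\<in>I. a j) = 1"
    and c: "\<And>j. j \<in> I \<Longrightarrow> c j \<ge> 0"
  shows "xlnx (\<Sum>j\<in>I. a j * c j) \<le> (\<Sum>j\<in>I. a j * xlnx (c j))"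
proof -
  define q where "q = (\<Sum>j\<in>I. a j * c j)"
  have q0: "q \<ge> 0" unfolding q_def using a c by (intro sum_nonneg) auto
  show ?thesis
  proof (cases "q = 0")
    case True
    have "a j * c j = 0" if "j \<in> I" for j
      using True sum_nonneg_eq_0_iff[OF fin, of "\<lambda>j. a j * c j"] a c that unfolding q_def by auto
    hence "a j * xlnx (c j) = 0" if "j \<in> I" for j using that by (auto simp: xlnx_def)
    hence "(\<Sum>j\<in>I. a j * xlnx (c j)) = 0" by (intro sum.neutral) auto
    thus ?thesis using True unfolding q_def by (simp add: xlnx_def)
  next
    case False
    hence "q > 0" using q0 by simp
    have "(\<Sum>j\<in>I. a j * (xlnx q + (1 + ln q) * (c j - q)))
        = (\<Sum>j\<in>I. (xlnx q - (1 + ln q) * q) * a j + (1 + ln q) * (a j * c j))"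
      by (intro sum.cong refl) (simp add: algebra_simps)
    also have "\<dots> = (xlnx q - (1 + ln q) * q) * (\<Sum>j\<in>I. a j) + (1 + ln q) * q"
      unfolding q_def by (simp add: sum.distrib sum_distrib_left)
    finally have "xlnx q = (\<Sum>j\<in>I. a j * (xlnx q + (1 + ln q) * (c j - q)))"
      using sa by (simp add: algebra_simps)
    also have "\<dots> \<le> (\<Sum>j\<in>I. a j * xlnx (c j))"
      using xlnx_tangent_le[OF \<open>q > 0\<close>] a c by (intro sum_mono mult_left_mono) auto
    finally show ?thesis unfolding q_def .
  qed
qed

lemma sum_xlnx_stochastic_le:
  fixes a :: "'j::finite \<Rightarrow> 'k::finite \<Rightarrow> real"
  assumes a: "\<And>j k. a j k \<ge> 0" and sa: "\<And>k. (\<Sum>j\<in>UNIV. a j k) = 1" and c: "\<And>j. c j \<ge> 0"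
  shows "(\<Sum>k\<in>UNIV. xlnx (\<Sum>j\<in>UNIV. a j k * c j)) \<le> (\<Sum>j\<in>UNIV. (\<Sum>k\<in>UNIV. a j k) * xlnx (c j))"
proof -
  have "(\<Sum>k\<in>UNIV. xlnx (\<Sum>j\<in>UNIV. a j k * c j)) \<le> (\<Sum>k\<in>UNIV. \<Sum>j\<in>UNIV. a j k * xlnx (c j))"
    using a sa c by (intro sum_mono jensen_xlnx) auto
  also have "\<dots> = (\<Sum>j\<in>UNIV. (\<Sum>k\<in>UNIV. a j k) * xlnx (c j))"
    by (subst sum.swap) (simp add: sum_distrib_right)
  finally show ?thesis .
qed

text \<open>The classical Gibbs inequality, for the distribution \<open>s\<close> transported by a doubly stochastic \<open>B\<close>:
  \<open>\<Sum> B k j s j ln r k \<le> \<Sum> s j ln s j\<close> for the Boltzmann weights \<open>r\<close>.\<close>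

lemma log_partition_le_doubly_stochastic:
  fixes B :: "'k::finite \<Rightarrow> 'j::finite \<Rightarrow> real" and h :: "'k \<Rightarrow> real" and s :: "'j \<Rightarrow> real"
  assumes B: "\<And>k j. B k j \<ge> 0" and rows: "\<And>k. (\<Sum>j\<in>UNIV. B k j) = 1"
    and cols: "\<And>j. (\<Sum>k\<in>UNIV. B k j) = 1"
    and s: "\<And>j. s j \<ge> 0" and ss: "(\<Sum>j\<in>UNIV. s j) = 1" and \<beta>: "\<beta> > 0"
  shows "- ln (\<Sum>k\<in>UNIV. exp (- \<beta> * h k)) / \<beta>
     \<le> (\<Sum>k\<in>UNIV. \<Sum>j\<in>UNIV. h k * s j * B k j) + (\<Sum>j\<in>UNIV. xlnx (s j)) / \<beta>"
proof -
  define Z where "Z = (\<Sum>k\<in>UNIV. exp (- \<beta> * h k))"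
  have Z: "Z > 0" unfolding Z_def by (intro sum_pos) auto
  define r where "r k = exp (- \<beta> * h k) / Z" for k
  have r: "r k > 0" for k unfolding r_def using Z by simp
  have ln_r: "ln (r k) = - \<beta> * h k - ln Z" for k unfolding r_def using Z by (simp add: ln_div)
  have sum_r: "(\<Sum>k\<in>UNIV. r k) = 1"
    unfolding r_def using Z by (simp add: sum_divide_distrib[symmetric] Z_def)
  define T where "T = (\<Sum>k\<in>UNIV. \<Sum>j\<in>UNIV. h k * s j * B k j)"
  define X where "X = (\<Sum>j\<in>UNIV. xlnx (s j))"
  have sum_swap_cols: "(\<Sum>k\<in>UNIV. \<Sum>j\<in>UNIV. B k j * g j) = (\<Sum>j\<in>UNIV. g j)" for g
    by (subst sum.swap) (simp add: sum_distrib_right[symmetric] cols)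
  have "- \<beta> * T - ln Z - X = (\<Sum>k\<in>UNIV. \<Sum>j\<in>UNIV. B k j * (s j * ln (r k) - xlnx (s j)))"
  proof -
    have "(\<Sum>k\<in>UNIV. \<Sum>j\<in>UNIV. B k j * (s j * ln (r k) - xlnx (s j)))
        = (\<Sum>k\<in>UNIV. \<Sum>j\<in>UNIV. (- \<beta>) * (h k * s j * B k j) + (- ln Z) * (B k j * s j)
            - B k j * xlnx (s j))"
      unfolding ln_r by (intro sum.cong refl) (simp add: algebra_simps)
    also have "\<dots> = - \<beta> * T + (- ln Z) * (\<Sum>k\<in>UNIV. \<Sum>j\<in>UNIV. B k j * s j)
        - (\<Sum>k\<in>UNIV. \<Sum>j\<in>UNIV. B k j * xlnx (s j))"
      unfolding T_def by (simp add: sum_subtractf sum.distrib sum_distrib_left sum_negf)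
    finally show ?thesis
      unfolding X_def using sum_swap_cols[of "\<lambda>j. s j"] sum_swap_cols[of "\<lambda>j. xlnx (s j)"] ss
      by simp
  qed
  also have "\<dots> \<le> (\<Sum>k\<in>UNIV. \<Sum>j\<in>UNIV. B k j * (r k - s j))"
    using mult_ln_minus_xlnx_le[OF s r] B by (intro sum_mono mult_left_mono) auto
  also have "\<dots> = (\<Sum>k\<in>UNIV. r k * (\<Sum>j\<in>UNIV. B k j)) - (\<Sum>k\<in>UNIV. \<Sum>j\<in>UNIV. B k j * s j)"
    by (simp add: right_diff_distrib sum_subtractf sum_distrib_left mult.commute)
  also have "\<dots> = 0" using rows sum_r sum_swap_cols[of "\<lambda>j. s j"] ss by simp
  finally have "- \<beta> * T - ln Z - X \<le> 0" .
  thus ?thesis unfolding Z_def[symmetric] T_def[symmetric] X_def[symmetric] using \<beta>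
    by (simp add: field_simps)
qed

section \<open>Density operators and von Neumann entropy\<close>

lemma cdiag_unitary_conj_nth:
  assumes "cdiag q = C ** cdiag r ** cadj C"
  shows "q$k = (\<Sum>j\<in>UNIV. (cmod (C$k$j))\<^sup>2 * r$j)"
proof -
  have "complex_of_real (q$k) = (cdiag q)$k$k" by (simp add: cdiag_nth)
  also have "\<dots> = complex_of_real (\<Sum>j\<in>UNIV. (cmod (C$k$j))\<^sup>2 * r$j)"
    unfolding assms conj_cdiag_diag_nth by (simp add: mult.commute)
  finally show ?thesis by (simp only: of_real_eq_iff)
qed

lemma sum_xlnx_unitary_conj_le:
  assumes C: "unitary C" and qr: "cdiag q = C ** cdiag r ** cadj C" and r: "\<And>j. r$j \<ge> 0"
  shows "(\<Sum>k\<in>UNIV. xlnx (q$k)) \<le> (\<Sum>j\<in>UNIV. xlnx (r$j))"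
  using sum_xlnx_stochastic_le[of "\<lambda>j k. (cmod (C$k$j))\<^sup>2" "\<lambda>j. r$j"]
  unfolding cdiag_unitary_conj_nth[OF qr] by (simp add: r unitary_row_norms[OF C] unitary_col_norms[OF C])

text \<open>\<open>hfun\<close> diagonalises with an arbitrary eigenbasis; comparing it with the given one through the
  doubly stochastic \<open>|C k j|\<^sup>2\<close> in both directions shows that \<open>\<Sum> xlnx\<close> of the spectrum does not depend on that choice.\<close>

lemma vN_entropy_conj_cdiag:
  assumes U: "unitary U" and \<sigma>: "\<sigma> = U ** cdiag r ** cadj U" and r: "\<And>j. r$j \<ge> 0"
  shows "vN_entropy \<sigma> = - (\<Sum>j\<in>UNIV. xlnx (r$j))"
proof -
  obtain W q where W: "unitary W" and \<sigma>q: "\<sigma> = W ** cdiag q ** cadj W"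
    and f\<sigma>: "hfun xlnx \<sigma> = W ** cdiag (\<chi> i. xlnx (q$i)) ** cadj W"
    using hfun_spectral[OF hermitian_conj_cdiag[of U r, folded \<sigma>]] .
  define C where "C = cadj W ** U"
  have C: "unitary C" unfolding C_def by (intro unitary_mult unitary_cadj U W)
  have "cdiag q = cadj W ** \<sigma> ** W" by (simp add: \<sigma>q unitary_conj_cancel[OF W])
  also have "\<dots> = C ** cdiag r ** cadj C" by (simp add: \<sigma> C_def cadj_mult matrix_mul_assoc)
  finally have qr: "cdiag q = C ** cdiag r ** cadj C" .
  have "cdiag r = cadj C ** cdiag q ** C" by (simp add: qr unitary_conj_cancel[OF C])
  hence rq: "cdiag r = cadj C ** cdiag q ** cadj (cadj C)" by simp
  have q: "q$k \<ge> 0" for k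
    unfolding cdiag_unitary_conj_nth[OF qr] using r by (intro sum_nonneg) simp
  have "(\<Sum>k\<in>UNIV. xlnx (q$k)) = (\<Sum>j\<in>UNIV. xlnx (r$j))"
    using sum_xlnx_unitary_conj_le[OF C qr r] sum_xlnx_unitary_conj_le[OF unitary_cadj[OF C] rq q]
    by linarith
  moreover have "vN_entropy \<sigma> = - (\<Sum>k\<in>UNIV. xlnx (q$k))"
    unfolding vN_entropy_def f\<sigma> by (simp add: trace_unitary_conj[OF W] trace_cdiag)
  ultimately show ?thesis by simp
qed

lemma density_conj_cdiag:
  assumes W: "unitary W" and s: "\<And>k. 0 \<le> s$k" and s1: "(\<Sum>k\<in>UNIV. s$k) = 1"
  shows "density (W ** cdiag s ** cadj W)"
proof -
  have "0 \<le> Re (cinner v ((W ** cdiag s ** cadj W) *v v))" for v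
  proof -
    define y where "y = cadj W *v v"
    have "cinner v ((W ** cdiag s ** cadj W) *v v) = cinner v (W *v (cdiag s *v y))"
      by (simp add: y_def matrix_vector_mul_assoc matrix_mul_assoc)
    also have "\<dots> = cinner y (cdiag s *v y)" unfolding y_def by (rule cinner_adj)
    also have "\<dots> = (\<Sum>k\<in>UNIV. complex_of_real (s$k * (cmod (y$k))\<^sup>2))"
      unfolding cinner_def mat_vec_nth cdiag_nth
      by (intro sum.cong refl)
         (simp add: if_distrib if_distribR cong: if_cong, simp add: mult_ac flip: complex_norm_square)
    finally show ?thesis using s by (simp add: sum_nonneg)
  qed
  moreover have "trace (W ** cdiag s ** cadj W) = 1"
    using s1 by (simp add: trace_unitary_conj[OF W] trace_cdiag flip: of_real_sum)
  ultimately show ?thesis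
    using hermitian_conj_cdiag unfolding density_def psd_def cinner_def by blast
qed

lemma density_spectral:
  assumes "density \<sigma>"
  obtains W s where "unitary W" "\<sigma> = W ** cdiag s ** cadj W" "\<And>k. 0 \<le> s$k" "(\<Sum>k\<in>UNIV. s$k) = 1"
    "vN_entropy \<sigma> = - (\<Sum>k\<in>UNIV. xlnx (s$k))"
proof -
  have herm: "hermitian \<sigma>" and pos: "\<And>v. 0 \<le> Re (cinner v (\<sigma> *v v))" and tr: "trace \<sigma> = 1"
    using assms by (auto simp: density_def psd_def cinner_def)
  obtain W s where W: "unitary W" and \<sigma>: "\<sigma> = W ** cdiag s ** cadj W"
    using hermitian_spectral[OF herm] by blast
  have "complex_of_real (s$k) = cinner (column k W) (\<sigma> *v column k W)" for k
    using unitary_conj_cancel[OF W, of "cdiag s"]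
    by (simp add: \<sigma> cdiag_nth flip: conj_diag_nth_cinner)
  hence "0 \<le> s$k" for k using pos[of "column k W"] by (metis Re_complex_of_real)
  moreover have "(\<Sum>k\<in>UNIV. s$k) = 1"
    using tr by (simp add: \<sigma> trace_unitary_conj[OF W] trace_cdiag flip: of_real_sum)
  ultimately show ?thesis using that W \<sigma> vN_entropy_conj_cdiag[OF W \<sigma>] by blast
qed

lemma density_unitary_conj:
  assumes U: "unitary U" and \<sigma>: "density \<sigma>"
  shows "density (U ** \<sigma> ** cadj U) \<and> vN_entropy (U ** \<sigma> ** cadj U) = vN_entropy \<sigma>"
proof -
  obtain W s where W: "unitary W" and \<sigma>s: "\<sigma> = W ** cdiag s ** cadj W" and s: "\<And>k. 0 \<le> s$k"
    and s1: "(\<Sum>k\<in>UNIV. s$k) = 1" and S: "vN_entropy \<sigma> = - (\<Sum>k\<in>UNIV. xlnx (s$k))"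
    using density_spectral[OF \<sigma>] by blast
  have UW: "unitary (U ** W)" by (rule unitary_mult[OF U W])
  have "U ** \<sigma> ** cadj U = (U ** W) ** cdiag s ** cadj (U ** W)"
    by (simp add: \<sigma>s cadj_mult matrix_mul_assoc)
  thus ?thesis using density_conj_cdiag[OF UW s s1] vN_entropy_conj_cdiag[OF UW _ s] S by simp
qed

section \<open>The Gibbs variational principle\<close>

definition free_energy :: "real \<Rightarrow> 'n::finite cmat \<Rightarrow> 'n cmat \<Rightarrow> real" where
  "free_energy \<beta> H \<sigma> = energy H \<sigma> - vN_entropy \<sigma> / \<beta>"

lemma energy_conj_cdiag:
  assumes U: "unitary U" and H: "H = U ** cdiag h ** cadj U"
  shows "energy H (W ** cdiag s ** cadj W)
     = (\<Sum>k\<in>UNIV. \<Sum>j\<in>UNIV. h$k * s$j * (cmod ((cadj U ** W)$k$j))\<^sup>2)"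
proof -
  define C where "C = cadj U ** W"
  have "trace (H ** (W ** cdiag s ** cadj W))
      = trace (U ** (cdiag h ** cadj U ** (W ** cdiag s ** cadj W)))"
    by (simp add: H matrix_mul_assoc)
  also have "\<dots> = trace ((cdiag h ** cadj U ** (W ** cdiag s ** cadj W)) ** U)"
    by (rule trace_mul_sym)
  also have "\<dots> = trace (cdiag h ** (C ** cdiag s ** cadj C))"
    by (simp add: C_def cadj_mult matrix_mul_assoc)
  finally show ?thesis
    unfolding energy_def C_def[symmetric]
    by (simp add: trace_cdiag_mult conj_cdiag_diag_nth sum_distrib_left mult.assoc)
qed

lemma log_partition_le_free_energy:
  assumes U: "unitary U" and H: "H = U ** cdiag h ** cadj U" and \<sigma>: "density \<sigma>" and \<beta>: "\<beta> > 0"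
  shows "- ln (\<Sum>k\<in>UNIV. exp (- \<beta> * h$k)) / \<beta> \<le> free_energy \<beta> H \<sigma>"
proof -
  obtain W s where W: "unitary W" and \<sigma>s: "\<sigma> = W ** cdiag s ** cadj W" and s: "\<And>k. 0 \<le> s$k"
    and s1: "(\<Sum>k\<in>UNIV. s$k) = 1" and S: "vN_entropy \<sigma> = - (\<Sum>k\<in>UNIV. xlnx (s$k))"
    using density_spectral[OF \<sigma>] by blast
  define C where "C = cadj U ** W"
  have C: "unitary C" unfolding C_def by (intro unitary_mult unitary_cadj U W)
  show ?thesis
    unfolding free_energy_def S unfolding \<sigma>s energy_conj_cdiag[OF U H] C_def[symmetric]
    using log_partition_le_doubly_stochastic[of "\<lambda>k j. (cmod (C$k$j))\<^sup>2" "\<lambda>j. s$j" \<beta> "\<lambda>k. h$k"]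
      unitary_row_norms[OF C] unitary_col_norms[OF C] s s1 \<beta> by simp
qed

lemma gibbs_spectral:
  assumes "hermitian H"
  obtains U h where "unitary U" "H = U ** cdiag h ** cadj U"
    "gibbs \<beta> H = U ** cdiag (\<chi> k. exp (- \<beta> * h$k) / (\<Sum>j\<in>UNIV. exp (- \<beta> * h$j))) ** cadj U"
proof -
  obtain U h where U: "unitary U" and H: "H = U ** cdiag h ** cadj U"
    and E: "hfun (\<lambda>x. exp (- \<beta> * x)) H = U ** cdiag (\<chi> k. exp (- \<beta> * h$k)) ** cadj U"
    using hfun_spectral[OF assms] .
  define Z where "Z = (\<Sum>j\<in>UNIV. exp (- \<beta> * h$j))"
  have "trace (hfun (\<lambda>x. exp (- \<beta> * x)) H) = complex_of_real Z"
    unfolding E Z_def by (simp add: trace_unitary_conj[OF U] trace_cdiag)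
  hence "gibbs \<beta> H = smat (complex_of_real (1/Z)) (U ** cdiag (\<chi> k. exp (- \<beta> * h$k)) ** cadj U)"
    unfolding gibbs_def Let_def by (simp only: E of_real_divide of_real_1)
  also have "\<dots> = U ** cdiag (\<chi> k. (1/Z) * exp (- \<beta> * h$k)) ** cadj U"
    by (simp only: smat_conj smat_cdiag vec_lambda_beta)
  also have "\<dots> = U ** cdiag (\<chi> k. exp (- \<beta> * h$k) / Z) ** cadj U" by simp
  finally show ?thesis using that U H unfolding Z_def by blast
qed

lemma density_gibbs:
  assumes "hermitian H"
  shows "density (gibbs \<beta> H)"
proof -
  obtain U h where U: "unitary U"
    and G: "gibbs \<beta> H = U ** cdiag (\<chi> k. exp (- \<beta> * h$k) / (\<Sum>j\<in>UNIV. exp (- \<beta> * h$j))) ** cadj U"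
    using gibbs_spectral[OF assms] .
  have "(\<Sum>j\<in>UNIV. exp (- \<beta> * h$j)) > 0" by (intro sum_pos) auto
  thus ?thesis unfolding G
    by (intro density_conj_cdiag[OF U]) (simp_all add: sum_divide_distrib[symmetric])
qed

lemma free_energy_gibbs:
  assumes U: "unitary U" and H: "H = U ** cdiag h ** cadj U"
    and G: "gibbs \<beta> H = U ** cdiag (\<chi> k. exp (- \<beta> * h$k) / (\<Sum>j\<in>UNIV. exp (- \<beta> * h$j))) ** cadj U"
    and \<beta>: "\<beta> > 0"
  shows "free_energy \<beta> H (gibbs \<beta> H) = - ln (\<Sum>j\<in>UNIV. exp (- \<beta> * h$j)) / \<beta>"
proof -
  define Z where "Z = (\<Sum>j\<in>UNIV. exp (- \<beta> * h$j))"
  define r :: "real^'a" where "r = (\<chi> k. exp (- \<beta> * h$k) / Z)"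
  have Z: "Z > 0" unfolding Z_def by (intro sum_pos) auto
  have sum_r: "(\<Sum>k\<in>UNIV. r$k) = 1" unfolding r_def using Z by (simp add: sum_divide_distrib[symmetric] Z_def)
  have G': "gibbs \<beta> H = U ** cdiag r ** cadj U" unfolding G r_def Z_def ..
  have unit: "(cmod ((cadj U ** U)$k$j))\<^sup>2 = (if k = j then 1 else 0)" for k j
    using U by (simp add: unitary_def mat_nth)
  have "energy H (gibbs \<beta> H) = (\<Sum>k\<in>UNIV. h$k * r$k)"
    unfolding G' energy_conj_cdiag[OF U H] unit by (simp add: if_distrib cong: if_cong)
  moreover have "vN_entropy (gibbs \<beta> H) = - (\<Sum>k\<in>UNIV. xlnx (r$k))"
    using G' vN_entropy_conj_cdiag[OF U] Z unfolding r_def by (simp add: less_imp_le)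
  moreover have "(\<Sum>k\<in>UNIV. xlnx (r$k)) = - \<beta> * (\<Sum>k\<in>UNIV. h$k * r$k) - ln Z"
  proof -
    have "(\<Sum>k\<in>UNIV. xlnx (r$k)) = (\<Sum>k\<in>UNIV. - \<beta> * (h$k * r$k) - ln Z * r$k)"
      using Z by (intro sum.cong refl) (simp add: xlnx_def r_def ln_div field_simps)
    thus ?thesis using sum_r by (simp add: sum_subtractf sum_negf flip: sum_distrib_left)
  qed
  ultimately show ?thesis using \<beta> unfolding free_energy_def Z_def by (simp add: field_simps)
qed

theorem gibbs_minimizes_free_energy:
  assumes "hermitian H" and "\<beta> > 0" and "density \<sigma>"
  shows "free_energy \<beta> H (gibbs \<beta> H) \<le> free_energy \<beta> H \<sigma>"
proof -
  obtain U h where "unitary U" "H = U ** cdiag h ** cadj U"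
    "gibbs \<beta> H = U ** cdiag (\<chi> k. exp (- \<beta> * h$k) / (\<Sum>j\<in>UNIV. exp (- \<beta> * h$j))) ** cadj U"
    using gibbs_spectral[OF assms(1)] .
  thus ?thesis using free_energy_gibbs log_partition_le_free_energy assms(2,3) by metis
qed

lemma coarse_projectors_hermitian: "coarse_projectors P \<Longrightarrow> hermitian (P i)"
  by (simp add: coarse_projectors_def)

lemma coarse_projectors_idem: "coarse_projectors P \<Longrightarrow> P i ** P i = P i"
  by (simp add: coarse_projectors_def)

lemma coarse_projectors_sum: "coarse_projectors P \<Longrightarrow> (\<Sum>i\<in>UNIV. P i) = mat 1"
  by (simp add: coarse_projectors_def)

lemma projector_conj_diag_nth:
  assumes "coarse_projectors P"
  shows "(cadj Y ** P i ** Y)$k$k = complex_of_real ((norm (P i *v column k Y))\<^sup>2)"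
proof -
  have "(cadj Y ** P i ** Y)$k$k = cinner (column k Y) ((P i ** P i) *v column k Y)"
    unfolding conj_diag_nth_cinner coarse_projectors_idem[OF assms] ..
  also have "\<dots> = cinner (P i *v column k Y) (P i *v column k Y)"
    unfolding matrix_vector_mul_assoc[symmetric]
    by (rule cinner_hermitian[OF coarse_projectors_hermitian[OF assms]])
  finally show ?thesis by (simp add: cinner_self)
qed

lemma Vol_pos:
  assumes "coarse_projectors P" shows "Vol P i > 0"
proof -
  have col: "P i *v column k (mat 1) = column k (P i)" for k
    by (simp add: vec_eq_iff mat_vec_nth column_def mat_nth if_distrib cong: if_cong)
  have "trace (P i) = trace (cadj (mat 1) ** P i ** mat 1)" by simp
  hence V: "Vol P i = (\<Sum>k\<in>UNIV. (norm (column k (P i)))\<^sup>2)"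
    unfolding Vol_def trace_def projector_conj_diag_nth[OF assms] col by simp
  have "P i \<noteq> 0" using assms by (simp add: coarse_projectors_def)
  then obtain k where "column k (P i) \<noteq> 0" by (auto simp: vec_eq_iff column_def)
  hence "(norm (column k (P i)))\<^sup>2 > 0" by simp
  thus ?thesis unfolding V using sum_pos2[of UNIV k "\<lambda>k. (norm (column k (P i)))\<^sup>2"] by simp
qed

lemma prob_nonneg:
  assumes "coarse_projectors P" "density \<rho>" shows "prob P \<rho> i \<ge> 0"
proof -
  have "trace (P i ** \<rho>) = trace (P i ** (P i ** \<rho>))"
    by (simp add: matrix_mul_assoc coarse_projectors_idem[OF assms(1)])
  also have "\<dots> = trace (P i ** \<rho> ** P i)" by (rule trace_mul_sym)
  also have "\<dots> = trace (cadj (P i) ** \<rho> ** P i)"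
    using coarse_projectors_hermitian[OF assms(1)] by (simp add: hermitian_def)
  finally have "prob P \<rho> i = (\<Sum>k\<in>UNIV. Re (cinner (column k (P i)) (\<rho> *v column k (P i))))"
    unfolding prob_def trace_def conj_diag_nth_cinner by simp
  thus ?thesis using assms(2) by (simp add: sum_nonneg density_def psd_def cinner_def)
qed

lemma prob_sum:
  assumes "coarse_projectors P" "density \<rho>" shows "(\<Sum>i\<in>UNIV. prob P \<rho> i) = 1"
proof -
  have "(\<Sum>i\<in>UNIV. prob P \<rho> i) = Re (trace ((\<Sum>i\<in>UNIV. P i) ** \<rho>))"
    unfolding prob_def mat_mult_sum_left trace_sum by simp
  also have "\<dots> = 1" using assms by (simp add: coarse_projectors_sum density_def)
  finally show ?thesis .
qed

text \<open>The eigenvalues \<open>q\<close> of \<open>\<Sum> c i P i\<close> are mixtures \<open>q k = \<Sum> a i k c i\<close> with \<open>a i k = |P i w k|\<^sup>2\<close> for an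
  eigenbasis \<open>w\<close>; \<open>a\<close> sums to \<open>1\<close> over \<open>i\<close> and to \<open>V i\<close> over \<open>k\<close>.\<close>

lemma coarse_combination_spectral:
  assumes P: "coarse_projectors P" and c: "\<And>i. c i \<ge> 0"
  obtains W q where "unitary W" "(\<Sum>i\<in>UNIV. smat (complex_of_real (c i)) (P i)) = W ** cdiag q ** cadj W"
    "\<And>k. q$k \<ge> 0" "(\<Sum>k\<in>UNIV. q$k) = (\<Sum>i\<in>UNIV. c i * Vol P i)"
    "(\<Sum>k\<in>UNIV. xlnx (q$k)) \<le> (\<Sum>i\<in>UNIV. Vol P i * xlnx (c i))"
proof -
  define X where "X = (\<Sum>i\<in>UNIV. smat (complex_of_real (c i)) (P i))"
  have "hermitian X"
    unfolding X_def hermitian_def cadj_sum cadj_smat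
    using coarse_projectors_hermitian[OF P] by (simp add: hermitian_def)
  then obtain W q where W: "unitary W" and Xq: "X = W ** cdiag q ** cadj W"
    using hermitian_spectral by blast
  define a where "a i k = (norm (P i *v column k W))\<^sup>2" for i k
  have a: "a i k \<ge> 0" for i k unfolding a_def by simp
  have entry: "(cadj W ** A ** W)$k$k = (\<Sum>i\<in>UNIV. complex_of_real (b i * a i k))"
    if "A = (\<Sum>i\<in>UNIV. smat (complex_of_real (b i)) (P i))" for A b k
    unfolding that mat_mult_sum_left mat_mult_sum_right smat_mult_left smat_mult_right
    by (simp add: projector_conj_diag_nth[OF P] a_def)
  have q: "q$k = (\<Sum>i\<in>UNIV. a i k * c i)" for k
  proof -
    have "complex_of_real (q$k) = (cadj W ** X ** W)$k$k"
      using unitary_conj_cancel[OF W] by (simp add: Xq cdiag_nth)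
    also have "\<dots> = complex_of_real (\<Sum>i\<in>UNIV. a i k * c i)"
      unfolding entry[OF X_def] by (simp add: mult.commute)
    finally show ?thesis by (simp only: of_real_eq_iff)
  qed
  have sum_a: "(\<Sum>i\<in>UNIV. a i k) = 1" for k
  proof -
    have "mat 1 = (\<Sum>i\<in>UNIV. smat (complex_of_real 1) (P i))"
      using coarse_projectors_sum[OF P] by (simp add: vec_eq_iff)
    from entry[OF this, of k] show ?thesis
      using W by (simp add: unitary_def mat_nth flip: of_real_sum)
  qed
  have Vol_a: "(\<Sum>k\<in>UNIV. a i k) = Vol P i" for i
  proof -
    have "complex_of_real (\<Sum>k\<in>UNIV. a i k) = trace (cadj W ** P i ** cadj (cadj W))"
      by (simp add: trace_def projector_conj_diag_nth[OF P] a_def)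
    thus ?thesis unfolding Vol_def trace_unitary_conj[OF unitary_cadj[OF W]] by (metis Re_complex_of_real)
  qed
  show ?thesis
  proof
    show "q$k \<ge> 0" for k unfolding q using a c by (auto intro!: sum_nonneg)
    show "(\<Sum>k\<in>UNIV. q$k) = (\<Sum>i\<in>UNIV. c i * Vol P i)"
      unfolding q Vol_a[symmetric] by (subst sum.swap) (simp add: sum_distrib_left mult.commute)
    show "(\<Sum>k\<in>UNIV. xlnx (q$k)) \<le> (\<Sum>i\<in>UNIV. Vol P i * xlnx (c i))"
      unfolding q Vol_a[symmetric] by (rule sum_xlnx_stochastic_le[OF a sum_a c])
  qed (use W Xq X_def in auto)
qed

lemma density_coarse_combination:
  assumes P: "coarse_projectors P" and c: "\<And>i. c i \<ge> 0" and c1: "(\<Sum>i\<in>UNIV. c i * Vol P i) = 1"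
  defines "X \<equiv> \<Sum>i\<in>UNIV. smat (complex_of_real (c i)) (P i)"
  shows "density X" and "- (\<Sum>i\<in>UNIV. Vol P i * xlnx (c i)) \<le> vN_entropy X"
proof -
  obtain W q where W: "unitary W" and Xq: "X = W ** cdiag q ** cadj W" and q: "\<And>k. q$k \<ge> 0"
    and q1: "(\<Sum>k\<in>UNIV. q$k) = (\<Sum>i\<in>UNIV. c i * Vol P i)"
    and J: "(\<Sum>k\<in>UNIV. xlnx (q$k)) \<le> (\<Sum>i\<in>UNIV. Vol P i * xlnx (c i))"
    using coarse_combination_spectral[of P c, OF P c, folded X_def] by blast
  show "density X" unfolding Xq using density_conj_cdiag[OF W q] q1 c1 by simp
  show "- (\<Sum>i\<in>UNIV. Vol P i * xlnx (c i)) \<le> vN_entropy X"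
    using vN_entropy_conj_cdiag[OF W Xq q] J by simp
qed

lemma density_normalized_projector:
  assumes P: "coarse_projectors P"
  shows "density (smat (complex_of_real (1 / Vol P i)) (P i))"
    and "ln (Vol P i) \<le> vN_entropy (smat (complex_of_real (1 / Vol P i)) (P i))"
proof -
  define c where "c l = (if l = i then 1 / Vol P i else 0)" for l
  have V: "Vol P i > 0" using Vol_pos[OF P] .
  have c: "c l \<ge> 0" for l unfolding c_def using V by simp
  have c1: "(\<Sum>l\<in>UNIV. c l * Vol P l) = 1" using V by (simp add: c_def if_distrib if_distribR cong: if_cong)
  have "smat (complex_of_real (c l)) (P l)
      = (if l = i then smat (complex_of_real (1 / Vol P i)) (P i) else 0)" for l
    by (simp add: c_def vec_eq_iff)
  hence X: "smat (complex_of_real (1 / Vol P i)) (P i) = (\<Sum>l\<in>UNIV. smat (complex_of_real (c l)) (P l))"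
    by simp
  have "- (\<Sum>l\<in>UNIV. Vol P l * xlnx (c l)) = ln (Vol P i)"
    using V by (simp add: c_def xlnx_def if_distrib ln_div cong: if_cong)
  thus "density (smat (complex_of_real (1 / Vol P i)) (P i))"
    and "ln (Vol P i) \<le> vN_entropy (smat (complex_of_real (1 / Vol P i)) (P i))"
    unfolding X using density_coarse_combination[of P c, OF P c c1] by simp_all
qed

lemma density_rho_cg:
  assumes P: "coarse_projectors P" and \<rho>: "density \<rho>"
  shows "density (rho_cg P \<rho>)"
    and "- (\<Sum>i\<in>UNIV. xlnx (prob P \<rho> i)) + (\<Sum>i\<in>UNIV. prob P \<rho> i * ln (Vol P i)) \<le> vN_entropy (rho_cg P \<rho>)"
proof -
  define c where "c i = prob P \<rho> i / Vol P i" for i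
  have V: "Vol P i > 0" for i using Vol_pos[OF P] .
  have p: "prob P \<rho> i \<ge> 0" for i using prob_nonneg[OF P \<rho>] .
  have c: "c i \<ge> 0" for i unfolding c_def using p V by (simp add: less_imp_le)
  have c1: "(\<Sum>i\<in>UNIV. c i * Vol P i) = 1"
    unfolding c_def using V prob_sum[OF P \<rho>] by (simp add: less_imp_neq[symmetric])
  have X: "rho_cg P \<rho> = (\<Sum>i\<in>UNIV. smat (complex_of_real (c i)) (P i))" unfolding rho_cg_def c_def ..
  have "- (\<Sum>i\<in>UNIV. Vol P i * xlnx (c i))
      = - (\<Sum>i\<in>UNIV. xlnx (prob P \<rho> i)) + (\<Sum>i\<in>UNIV. prob P \<rho> i * ln (Vol P i))"
    unfolding c_def xlnx_divide[OF V p] by (simp add: sum_subtractf)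
  thus "density (rho_cg P \<rho>)"
    and "- (\<Sum>i\<in>UNIV. xlnx (prob P \<rho> i)) + (\<Sum>i\<in>UNIV. prob P \<rho> i * ln (Vol P i)) \<le> vN_entropy (rho_cg P \<rho>)"
    unfolding X using density_coarse_combination[of P c, OF P c c1] by simp_all
qed

section \<open>Ergotropies\<close>

lemma min_unitary_bdd_below:
  fixes H X :: "'n::finite cmat"
  shows "bdd_below {Re (trace (H ** U ** X ** cadj U)) | U. unitary U}"
proof -
  define B where "B = (\<Sum>a\<in>UNIV. \<Sum>d\<in>UNIV. \<Sum>c\<in>UNIV. \<Sum>b\<in>UNIV. cmod (H$a$b) * cmod (X$c$d))"
  have "- B \<le> Re (trace (H ** U ** X ** cadj U))" if U: "unitary U" for U
  proof -
    have term_le: "cmod (H$a$b * U$b$c * X$c$d * cnj (U$a$d)) \<le> cmod (H$a$b) * cmod (X$c$d)" for a b c d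
    proof -
      have "cmod (U$b$c) * cmod (U$a$d) \<le> 1"
        using unitary_entry_norm_le[OF U] by (simp add: mult_le_one)
      hence "cmod (H$a$b) * cmod (X$c$d) * (cmod (U$b$c) * cmod (U$a$d)) \<le> cmod (H$a$b) * cmod (X$c$d)"
        by (simp add: mult_left_le)
      thus ?thesis by (simp add: norm_mult mult_ac)
    qed
    have "trace (H ** U ** X ** cadj U)
        = (\<Sum>a\<in>UNIV. \<Sum>d\<in>UNIV. \<Sum>c\<in>UNIV. \<Sum>b\<in>UNIV. H$a$b * U$b$c * X$c$d * cnj (U$a$d))"
      by (simp add: trace_def mat_mult_nth sum_distrib_right)
    hence "cmod (trace (H ** U ** X ** cadj U)) \<le> B"
      unfolding B_def using term_le by (simp add: order_trans[OF norm_sum] sum_mono)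
    thus ?thesis using abs_Re_le_cmod[of "trace (H ** U ** X ** cadj U)"] by linarith
  qed
  thus ?thesis unfolding bdd_below_def by blast
qed

lemma min_unitary_nonempty: "{Re (trace (H ** U ** X ** cadj U)) | U. unitary U} \<noteq> {}"
  using unitary_mat1 by blast

lemma min_unitary_ge_free_energy:
  fixes H X :: "'n::finite cmat"
  assumes "hermitian H" and "\<beta> > 0" and X: "density X"
  shows "free_energy \<beta> H (gibbs \<beta> H) + vN_entropy X / \<beta> \<le> min_unitary H X"
  unfolding min_unitary_def
proof (rule cInf_greatest[OF min_unitary_nonempty], clarify)
  fix U :: "'n cmat" assume U: "unitary U"
  have "free_energy \<beta> H (gibbs \<beta> H) \<le> free_energy \<beta> H (U ** X ** cadj U)"
    using gibbs_minimizes_free_energy assms density_unitary_conj[OF U X] by blast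
  thus "free_energy \<beta> H (gibbs \<beta> H) + vN_entropy X / \<beta> \<le> Re (trace (H ** U ** X ** cadj U))"
    using density_unitary_conj[OF U X] by (simp add: free_energy_def energy_def matrix_mul_assoc)
qed

lemma min_unitary_superadditive:
  fixes H :: "'n::finite cmat" and X :: "'i::finite \<Rightarrow> 'n cmat"
  assumes "\<And>i. c i \<ge> 0"
  shows "(\<Sum>i\<in>UNIV. c i * min_unitary H (X i))
     \<le> min_unitary H (\<Sum>i\<in>UNIV. smat (complex_of_real (c i)) (X i))"
  unfolding min_unitary_def
proof (rule cInf_greatest[OF min_unitary_nonempty], clarify)
  fix U :: "'n cmat" assume U: "unitary U"
  have "c i * Inf {Re (trace (H ** U ** X i ** cadj U)) | U. unitary U}
      \<le> c i * Re (trace (H ** U ** X i ** cadj U))" for i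
    using assms U by (intro mult_left_mono cInf_lower[OF _ min_unitary_bdd_below]) auto
  thus "(\<Sum>i\<in>UNIV. c i * Inf {Re (trace (H ** U ** X i ** cadj U)) | U. unitary U})
      \<le> Re (trace (H ** U ** (\<Sum>i\<in>UNIV. smat (complex_of_real (c i)) (X i)) ** cadj U))"
    unfolding Re_trace_conj_linear by (rule sum_mono)
qed

lemma W_inf_eq: "W_inf H \<gamma> \<rho> = energy H \<rho> - energy H (gibbs \<gamma> H)"
  unfolding W_inf_def energy_def by (simp add: mat_mult_diff_right trace_sub)

lemma W_obs_le_W_B:
  assumes "coarse_projectors P" and "density \<rho>"
  shows "W_obs H P \<rho> \<le> W_B H P \<rho>"
proof -
  have "rho_cg P \<rho> = (\<Sum>i\<in>UNIV. smat (complex_of_real (prob P \<rho> i))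
                          (smat (complex_of_real (1 / Vol P i)) (P i)))"
    unfolding rho_cg_def smat_smat by simp
  thus ?thesis unfolding W_obs_def W_B_def
    using min_unitary_superadditive[of "prob P \<rho>"] prob_nonneg[OF assms] by simp
qed

lemma W_B_le_W_inf:
  assumes H: "hermitian H" and P: "coarse_projectors P" and \<rho>: "density \<rho>" and \<beta>: "\<beta> > 0"
    and S: "vN_entropy (gibbs \<beta> H) \<le> (\<Sum>i\<in>UNIV. prob P \<rho> i * ln (Vol P i))"
  shows "W_B H P \<rho> \<le> W_inf H \<beta> \<rho>"
proof -
  define F where "F = free_energy \<beta> H (gibbs \<beta> H)"
  define p where "p = prob P \<rho>"
  have "energy H (gibbs \<beta> H) \<le> F + (\<Sum>i\<in>UNIV. p i * ln (Vol P i)) / \<beta>"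
    using S \<beta> unfolding F_def free_energy_def p_def by (simp add: divide_right_mono)
  also have "\<dots> = (\<Sum>i\<in>UNIV. p i * (F + ln (Vol P i) / \<beta>))"
    using prob_sum[OF P \<rho>] unfolding p_def
    by (simp add: distrib_left sum.distrib sum_distrib_right[symmetric] sum_divide_distrib)
  also have "\<dots> \<le> (\<Sum>i\<in>UNIV. p i * min_unitary H (smat (complex_of_real (1 / Vol P i)) (P i)))"
  proof (intro sum_mono mult_left_mono)
    fix i
    have "ln (Vol P i) / \<beta> \<le> vN_entropy (smat (complex_of_real (1 / Vol P i)) (P i)) / \<beta>"
      using density_normalized_projector(2)[OF P] \<beta> by (simp add: divide_right_mono)
    thus "F + ln (Vol P i) / \<beta> \<le> min_unitary H (smat (complex_of_real (1 / Vol P i)) (P i))"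
      using min_unitary_ge_free_energy[OF H \<beta> density_normalized_projector(1)[OF P, of i]]
      unfolding F_def by linarith
    show "0 \<le> p i" unfolding p_def by (rule prob_nonneg[OF P \<rho>])
  qed
  finally show ?thesis unfolding W_B_def W_inf_eq p_def by simp
qed

lemma W_obs_le_W_inf:
  assumes H: "hermitian H" and P: "coarse_projectors P" and \<rho>: "density \<rho>" and \<beta>: "\<beta> > 0"
    and S: "vN_entropy (gibbs \<beta> H)
          \<le> - (\<Sum>i\<in>UNIV. xlnx (prob P \<rho> i)) + (\<Sum>i\<in>UNIV. prob P \<rho> i * ln (Vol P i))"
  shows "W_obs H P \<rho> \<le> W_inf H \<beta> \<rho>"
proof -
  have "vN_entropy (gibbs \<beta> H) / \<beta> \<le> vN_entropy (rho_cg P \<rho>) / \<beta>"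
    using S density_rho_cg(2)[OF P \<rho>] \<beta> by (simp add: divide_right_mono)
  thus ?thesis
    using min_unitary_ge_free_energy[OF H \<beta> density_rho_cg(1)[OF P \<rho>]]
    unfolding W_obs_def W_inf_eq free_energy_def by simp
qed

lemma gibbs_energy_le_of_entropy_le:
  assumes H: "hermitian H" and \<beta>: "\<beta> > 0"
    and S: "vN_entropy (gibbs \<beta> H) \<le> vN_entropy (gibbs \<beta>' H)"
  shows "energy H (gibbs \<beta> H) \<le> energy H (gibbs \<beta>' H)"
proof -
  have "vN_entropy (gibbs \<beta> H) / \<beta> \<le> vN_entropy (gibbs \<beta>' H) / \<beta>"
    using S \<beta> by (simp add: divide_right_mono)
  thus ?thesis
    using gibbs_minimizes_free_energy[OF H \<beta> density_gibbs[OF H, of \<beta>']] unfolding free_energy_def by simp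
qed

theorem mainTheorem10:
  fixes H \<rho> :: "'n::finite cmat" and P :: "'i::finite \<Rightarrow> 'n cmat" and \<beta> \<beta>' :: real
  assumes "hermitian H"
    and "coarse_projectors P"
    and "density \<rho>"
    and "0 < \<beta>" and "0 < \<beta>'"
    and "vN_entropy (gibbs \<beta> H) = (\<Sum>i\<in>UNIV. prob P \<rho> i * ln (Vol P i))"
    and "vN_entropy (gibbs \<beta>' H) =
           - (\<Sum>i\<in>UNIV. xlnx (prob P \<rho> i)) + (\<Sum>i\<in>UNIV. prob P \<rho> i * ln (Vol P i))"
  shows "W_obs H P \<rho> \<le> W_B H P \<rho> \<and> W_B H P \<rho> \<le> W_inf H \<beta> \<rho>
       \<and> W_obs H P \<rho> \<le> W_inf H \<beta>' \<rho> \<and> W_inf H \<beta>' \<rho> \<le> W_inf H \<beta> \<rho>"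
proof -
  have p: "0 \<le> prob P \<rho> i" "prob P \<rho> i \<le> 1" for i
    using prob_nonneg[OF assms(2,3)] member_le_sum[of i UNIV "prob P \<rho>"] prob_sum[OF assms(2,3)]
    by (auto simp: prob_nonneg[OF assms(2,3)])
  have "vN_entropy (gibbs \<beta> H) \<le> vN_entropy (gibbs \<beta>' H)"
    using xlnx_nonpos[OF p] by (simp add: assms(6,7) sum_nonpos)
  thus ?thesis
    using W_obs_le_W_B[OF assms(2,3)] W_B_le_W_inf[OF assms(1-4)] W_obs_le_W_inf[OF assms(1-3,5)]
      gibbs_energy_le_of_entropy_le[OF assms(1,4)] assms(6,7)
    by (simp add: W_inf_eq)
qed

end
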